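(* Every $d$-variate narrow-sense geometric law is a $d$-variate wide-sense geometric law. For $d=2$ this inclusion is proper: the function $\bar F_{n_1,n_2}=(1/2)^{\max(n_1,n_2)}(2/5)^{\min(n_1,n_2)}$, $n_1,n_2\in\mathbb{N}_0$, is the survival function of an exchangeable bivariate wide-sense geometric law which is not narrow-sense geometric; its correlation coefficient equals $-1/8$.
   Context: $\mathbb{N}_0=\{0,1,\ldots\}$. Narrow-sense geometric law: for $p_I\in[0,1]$, $\emptyset\ne I\subseteq\{1,\ldots,d\}$, with $\prod_{I\ni k}p_I<1$, independent $E_I$ with $\mathbb{P}(E_I>n)=p_I^n$, $\tau_k=\min\{E_I:k\in I\}$. Wide-sense geometric law: for $\tilde p_I\in[0,1]$, $I\subseteq\{1,\ldots,d\}$, $\sum_I\tilde p_I=1$, $\sum_{I\not\ni k}\tilde p_I<1$, run i.i.d. trials with outcome $I$ of probability $\tilde p_I$, $\tilde E_I$ the first trial with outcome $I$, $\tau_k=\min\{\tilde E_I:k\in I\}$. *)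

theory Defs
  imports "HOL-Probability.Probability" "HOL-Probability.Product_PMF" "HOL-Probability.Stream_Space"
begin

text \<open>Laws of random vectors (tau_1,...,tau_d) are measures on the space of
  (extensional) functions {1..d} -> enat.\<close>
definition law_space :: "nat \<Rightarrow> (nat \<Rightarrow> enat) measure" where
  "law_space d = PiM {1..d} (\<lambda>_. count_space UNIV)"

text \<open>E with P(E > n) = p^n for n in N_0 (E = infinity a.s. if p = 1).\<close>
definition geom_enat :: "real \<Rightarrow> enat pmf" where
  "geom_enat p = (if p = 1 then return_pmf \<infinity>
                  else map_pmf (\<lambda>n. enat (Suc n)) (geometric_pmf (1 - p)))"

definition narrow_params :: "nat \<Rightarrow> (nat set \<Rightarrow> real) \<Rightarrow> bool" where
  "narrow_params d p \<longleftrightarrow>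
     (\<forall>I. I \<subseteq> {1..d} \<and> I \<noteq> {} \<longrightarrow> 0 \<le> p I \<and> p I \<le> 1) \<and>
     (\<forall>k\<in>{1..d}. (\<Prod>I\<in>{I. I \<subseteq> {1..d} \<and> k \<in> I}. p I) < 1)"

definition narrow_law :: "nat \<Rightarrow> (nat set \<Rightarrow> real) \<Rightarrow> (nat \<Rightarrow> enat) measure" where
  "narrow_law d p =
     distr (measure_pmf (Pi_pmf {I. I \<subseteq> {1..d} \<and> I \<noteq> {}} \<infinity> (\<lambda>I. geom_enat (p I))))
           (law_space d)
           (\<lambda>E. \<lambda>k\<in>{1..d}. Min (E ` {I. I \<subseteq> {1..d} \<and> k \<in> I}))"

definition wide_params :: "nat \<Rightarrow> (nat set \<Rightarrow> real) \<Rightarrow> bool" where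
  "wide_params d q \<longleftrightarrow>
     (\<forall>I. I \<subseteq> {1..d} \<longrightarrow> 0 \<le> q I \<and> q I \<le> 1) \<and>
     (\<Sum>I\<in>Pow {1..d}. q I) = 1 \<and>
     (\<forall>k\<in>{1..d}. (\<Sum>I\<in>{I. I \<subseteq> {1..d} \<and> k \<notin> I}. q I) < 1)"

definition trial_pmf :: "nat \<Rightarrow> (nat set \<Rightarrow> real) \<Rightarrow> nat set pmf" where
  "trial_pmf d q = embed_pmf (\<lambda>I. if I \<subseteq> {1..d} then q I else 0)"

text \<open>Index (counting from 1) of the first trial with outcome I; infinity if none.
  Trial number n+1 is the stream element at position n.\<close>
definition first_occ :: "nat set stream \<Rightarrow> nat set \<Rightarrow> enat" where
  "first_occ \<omega> I = (if \<exists>n. \<omega> !! n = I then enat (Suc (LEAST n. \<omega> !! n = I)) else \<infinity>)"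

definition wide_law :: "nat \<Rightarrow> (nat set \<Rightarrow> real) \<Rightarrow> (nat \<Rightarrow> enat) measure" where
  "wide_law d q =
     distr (stream_space (measure_pmf (trial_pmf d q))) (law_space d)
           (\<lambda>\<omega>. \<lambda>k\<in>{1..d}. Min (first_occ \<omega> ` {I. I \<subseteq> {1..d} \<and> k \<in> I}))"

definition is_narrow_law :: "nat \<Rightarrow> (nat \<Rightarrow> enat) measure \<Rightarrow> bool" where
  "is_narrow_law d L \<longleftrightarrow> (\<exists>p. narrow_params d p \<and> L = narrow_law d p)"

definition is_wide_law :: "nat \<Rightarrow> (nat \<Rightarrow> enat) measure \<Rightarrow> bool" where
  "is_wide_law d L \<longleftrightarrow> (\<exists>q. wide_params d q \<and> L = wide_law d q)"

definition correlation :: "'a measure \<Rightarrow> ('a \<Rightarrow> real) \<Rightarrow> ('a \<Rightarrow> real) \<Rightarrow> real" where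
  "correlation M X Y =
     (let mX = integral\<^sup>L M X; mY = integral\<^sup>L M Y in
      (\<integral>x. (X x - mX) * (Y x - mY) \<partial>M) /
      sqrt ((\<integral>x. (X x - mX)^2 \<partial>M) * (\<integral>x. (Y x - mY)^2 \<partial>M)))"

end

theory Submission
  imports Defs
begin

text \<open>
  A law on \<open>{1..d} \<rightarrow> \<nat> \<union> {\<infinity>}\<close> is determined by its survival probabilities \<open>P(\<tau> \<ge> n)\<close>,
  since the upper orthants form an intersection-stable generator of the discrete \<open>\<sigma>\<close>-algebra.
  A narrow-sense law with parameters \<open>p\<close> is the wide-sense law whose single trial fires every
  shock \<open>J\<close> independently with probability \<open>1 - p\<^sub>J\<close> and reports the union of the fired shocks:
  in both, \<open>P(\<tau> \<ge> n) = \<Prod>\<^sub>J p\<^sub>J ^ (max {n\<^sub>k | k \<in> J} - 1)\<close>.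

  For the example, trials with probability \<open>1/5\<close> on \<open>{}\<close> and \<open>{1,2}\<close> and \<open>3/10\<close> on each
  singleton yield the stated survival function. A narrow-sense law with this survival function
  would need \<open>p\<^sub>1\<^sub>2 = 5/4\<close>. The moments \<open>E \<tau>\<^sub>k = 2\<close>, \<open>E \<tau>\<^sub>k\<^sup>2 = 6\<close> and \<open>E \<tau>\<^sub>1\<tau>\<^sub>2 = 15/4\<close> are
  (double) sums of survival probabilities, so the correlation is \<open>(15/4 - 4) / 2 = -1/8\<close>.
\<close>

lemma space_law_space: "space (law_space d) = PiE {1..d} (\<lambda>_. UNIV)"
  by (simp add: law_space_def space_PiM)

lemma countable_space_law_space: "countable (space (law_space d))"
  unfolding space_law_space by (intro countable_PiE) auto

lemma sets_law_space: "sets (law_space d) = Pow (space (law_space d))"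
proof
  show "sets (law_space d) \<subseteq> Pow (space (law_space d))"
    using sets.sets_into_space by auto
next
  have singleton: "{x} \<in> sets (law_space d)" if "x \<in> space (law_space d)" for x
  proof -
    have "{x} = PiE {1..d} (\<lambda>i. {x i})"
      using that by (auto simp: space_law_space PiE_iff extensional_def fun_eq_iff)
        (metis atLeastAtMost_iff One_nat_def)
    also have "\<dots> \<in> sets (law_space d)"
      unfolding law_space_def by (intro sets_PiM_I_finite) auto
    finally show ?thesis .
  qed
  show "Pow (space (law_space d)) \<subseteq> sets (law_space d)"
  proof
    fix A assume "A \<in> Pow (space (law_space d))"
    then have "(\<Union>x\<in>A. {x}) \<in> sets (law_space d)"
      using countable_space_law_space[of d]
      by (intro sets.countable_UN'') (auto intro: countable_subset singleton)
    then show "A \<in> sets (law_space d)" by simp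
  qed
qed

lemma measurable_from_law_space:
  assumes "sets M = sets (law_space d)" and "f \<in> space M \<rightarrow> space N"
  shows "f \<in> measurable M N"
proof -
  have "space M = space (law_space d)" using assms(1) by (rule sets_eq_imp_space_eq)
  then have "measurable M N = measurable (count_space (space M)) N"
    using assms(1) by (intro measurable_cong_sets) (simp_all add: sets_law_space)
  then show ?thesis using assms(2) by simp
qed

definition upper_orthant :: "nat \<Rightarrow> (nat \<Rightarrow> nat) \<Rightarrow> (nat \<Rightarrow> enat) set" where
  "upper_orthant d n = {x \<in> space (law_space d). \<forall>k\<in>{1..d}. enat (n k) \<le> x k}"

lemma upper_orthant_in_sets: "upper_orthant d n \<in> sets (law_space d)"
  by (auto simp: sets_law_space upper_orthant_def)

lemma upper_orthant_0: "upper_orthant d (\<lambda>_. 0) = space (law_space d)"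
  by (auto simp: upper_orthant_def enat_0)

lemma enat_max_le_iff: "enat (max a b) \<le> x \<longleftrightarrow> enat a \<le> x \<and> enat b \<le> x"
  by (cases x) auto

lemma enat_max_less_iff: "enat (max a b) < x \<longleftrightarrow> enat a < x \<and> enat b < x"
  by (cases x) auto

lemma upper_orthant_Int:
  "upper_orthant d n \<inter> upper_orthant d m = upper_orthant d (\<lambda>k. max (n k) (m k))"
  by (auto simp: upper_orthant_def enat_max_le_iff)

lemma all_enat_le_iff: "(\<forall>m. enat m \<le> b) \<longleftrightarrow> b = \<infinity>"
  by (cases b) (auto simp: not_le gt_ex)

lemma enat_le_iff_all_truncations:
  "(\<forall>m. enat (if a = \<infinity> then m else the_enat a) \<le> b) \<longleftrightarrow> a \<le> b"
  by (cases a) (simp_all add: all_enat_le_iff)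

lemma enat_le_neq_iff: "a \<le> b \<Longrightarrow> a \<noteq> b \<longleftrightarrow> a \<noteq> \<infinity> \<and> enat (Suc (the_enat a)) \<le> b"
  by (cases a; cases b) auto

text \<open>A point is its upper orthant minus the strictly larger orthants in each finite coordinate.\<close>
lemma singleton_in_sigma_upper_orthants:
  assumes x: "x \<in> space (law_space d)"
  shows "{x} \<in> sigma_sets (space (law_space d)) (range (upper_orthant d))"
proof -
  let ?\<Omega> = "space (law_space d)" and ?G = "range (upper_orthant d)"
  interpret sigma_algebra ?\<Omega> "sigma_sets ?\<Omega> ?G"
    by (rule sigma_algebra_sigma_sets) (auto simp: upper_orthant_def)
  define V where "V = (\<Inter>m. upper_orthant d (\<lambda>k. if x k = \<infinity> then m else the_enat (x k)))"
  define W where "W = (\<Union>j\<in>{j\<in>{1..d}. x j \<noteq> \<infinity>}.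
                        upper_orthant d (\<lambda>k. if k = j then Suc (the_enat (x j)) else 0))"
  have "y \<in> V \<longleftrightarrow> y \<in> ?\<Omega> \<and>
      (\<forall>k\<in>{1..d}. \<forall>m. enat (if x k = \<infinity> then m else the_enat (x k)) \<le> y k)" for y
    unfolding V_def upper_orthant_def by blast
  then have V: "V = {y \<in> ?\<Omega>. \<forall>k\<in>{1..d}. x k \<le> y k}"
    by (simp only: enat_le_iff_all_truncations set_eq_iff mem_Collect_eq) blast
  have "{x} = V - W"
  proof (intro equalityI subsetI)
    fix y assume "y \<in> V - W"
    then have y: "y \<in> ?\<Omega>" "\<And>k. k \<in> {1..d} \<Longrightarrow> x k \<le> y k" and "y \<notin> W"
      by (auto simp: V)
    have "y k = x k" if k: "k \<in> {1..d}" for k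
    proof (rule ccontr)
      assume "y k \<noteq> x k"
      then have "x k \<noteq> \<infinity>" "enat (Suc (the_enat (x k))) \<le> y k"
        using enat_le_neq_iff[OF y(2)[OF k]] by auto
      then have "y \<in> W"
        unfolding W_def upper_orthant_def using y(1) k by (intro UN_I[of k]) (auto simp: enat_0)
      with \<open>y \<notin> W\<close> show False ..
    qed
    then show "y \<in> {x}" using PiE_ext[of y "{1..d}" _ x] x y(1) by (auto simp: space_law_space)
  qed (use x enat_le_neq_iff in \<open>auto simp: V W_def upper_orthant_def\<close>)
  moreover have "V \<in> sigma_sets ?\<Omega> ?G" unfolding V_def by (intro countable_INT) auto
  moreover have "W \<in> sigma_sets ?\<Omega> ?G" unfolding W_def by (intro finite_UN) auto
  ultimately show ?thesis by auto
qed

lemma sets_law_space_eq_sigma_upper_orthants: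
  "sets (law_space d) = sigma_sets (space (law_space d)) (range (upper_orthant d))"
proof
  let ?\<Omega> = "space (law_space d)" and ?G = "range (upper_orthant d)"
  interpret sigma_algebra ?\<Omega> "sigma_sets ?\<Omega> ?G"
    by (rule sigma_algebra_sigma_sets) (auto simp: upper_orthant_def)
  show "sets (law_space d) \<subseteq> sigma_sets ?\<Omega> ?G"
  proof
    fix A assume "A \<in> sets (law_space d)"
    then have "(\<Union>x\<in>A. {x}) \<in> sigma_sets ?\<Omega> ?G"
      using sets.sets_into_space countable_space_law_space[of d]
      by (intro countable_UN'') (auto intro: countable_subset singleton_in_sigma_upper_orthants)
    then show "A \<in> sigma_sets ?\<Omega> ?G" by simp
  qed
  show "sigma_sets ?\<Omega> ?G \<subseteq> sets (law_space d)"
    by (rule sets.sigma_sets_subset) (auto intro: upper_orthant_in_sets)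
qed

lemma law_space_measure_eqI:
  assumes M: "sets M = sets (law_space d)" and N: "sets N = sets (law_space d)"
    and finite: "emeasure M (space (law_space d)) \<noteq> \<infinity>"
    and eq: "\<And>n. emeasure M (upper_orthant d n) = emeasure N (upper_orthant d n)"
  shows "M = N"
proof (rule measure_eqI_generator_eq[where E = "range (upper_orthant d)"
      and \<Omega> = "space (law_space d)" and A = "\<lambda>_. upper_orthant d (\<lambda>_. 0)"])
  show "Int_stable (range (upper_orthant d))"
    by (auto intro!: Int_stableI simp: upper_orthant_Int)
  show "range (upper_orthant d) \<subseteq> Pow (space (law_space d))"
    by (auto simp: upper_orthant_def)
qed (use M N finite eq sets_law_space_eq_sigma_upper_orthants upper_orthant_0
       rangeI[of "upper_orthant d" "\<lambda>_. 0", unfolded upper_orthant_0] in auto)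

lemma prob_geometric_pmf_ge:
  assumes "0 \<le> p" "p < (1::real)"
  shows "measure_pmf.prob (geometric_pmf (1 - p)) {n. j \<le> n} = p ^ j"
proof -
  have "measure_pmf.prob (geometric_pmf (1 - p)) {n. j \<le> n}
      = 1 - measure_pmf.prob (geometric_pmf (1 - p)) {..<j}"
    using measure_pmf.prob_compl[of "{..<j}" "geometric_pmf (1 - p)"]
    by (simp add: Compl_eq_Diff_UNIV[symmetric] not_less atLeast_def)
  also have "measure_pmf.prob (geometric_pmf (1 - p)) {..<j} = (\<Sum>k<j. p ^ k * (1 - p))"
    using assms by (simp add: measure_measure_pmf_finite)
  also have "\<dots> = 1 - p ^ j"
    by (induction j) (auto simp: algebra_simps)
  finally show ?thesis by simp
qed

lemma prob_geom_enat_ge: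
  assumes "0 \<le> p" "p \<le> (1::real)"
  shows "measure_pmf.prob (geom_enat p) {e. enat m \<le> e} = p ^ (m - 1)"
proof (cases "p = 1")
  case True then show ?thesis by (simp add: geom_enat_def measure_return_pmf indicator_def)
next
  case False
  then have "measure_pmf.prob (geom_enat p) {e. enat m \<le> e}
      = measure_pmf.prob (geometric_pmf (1 - p)) ((\<lambda>n. enat (Suc n)) -` {e. enat m \<le> e})"
    by (simp add: geom_enat_def measure_map_pmf)
  also have "(\<lambda>n. enat (Suc n)) -` {e. enat m \<le> e} = {n. m - 1 \<le> n}" by auto
  finally show ?thesis using False assms by (simp add: prob_geometric_pmf_ge)
qed

definition nonempty_subsets :: "nat \<Rightarrow> nat set set" where
  "nonempty_subsets d = {I. I \<subseteq> {1..d} \<and> I \<noteq> {}}"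

lemma finite_nonempty_subsets [simp]: "finite (nonempty_subsets d)"
  by (rule finite_subset[of _ "Pow {1..d}"]) (auto simp: nonempty_subsets_def)

lemma finite_subsets_containing: "finite {I. I \<subseteq> {1..d::nat} \<and> k \<in> I}"
  by (rule finite_subset[of _ "Pow {1..d}"]) auto

lemma le_Min_subsets_containing_iff:
  fixes f :: "nat set \<Rightarrow> 'a :: linorder"
  assumes "k \<in> {1..d}"
  shows "x \<le> Min (f ` {I. I \<subseteq> {1..d} \<and> k \<in> I}) \<longleftrightarrow> (\<forall>I. I \<subseteq> {1..d} \<and> k \<in> I \<longrightarrow> x \<le> f I)"
proof -
  have "{k} \<in> {I. I \<subseteq> {1..d} \<and> k \<in> I}" using assms by simp
  then show ?thesis using finite_subsets_containing[of d k] by (subst Min_ge_iff) auto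
qed

lemma enat_Max_le_iff: "finite I \<Longrightarrow> I \<noteq> {} \<Longrightarrow> enat (Max (f ` I)) \<le> e \<longleftrightarrow> (\<forall>k\<in>I. enat (f k) \<le> e)"
  by (cases e) auto

definition min_shocks :: "nat \<Rightarrow> (nat set \<Rightarrow> enat) \<Rightarrow> (nat \<Rightarrow> enat)" where
  "min_shocks d E = (\<lambda>k\<in>{1..d}. Min (E ` {I. I \<subseteq> {1..d} \<and> k \<in> I}))"

lemma min_shocks_in_upper_orthant_iff:
  "min_shocks d E \<in> upper_orthant d n \<longleftrightarrow> (\<forall>I. I \<subseteq> {1..d} \<longrightarrow> (\<forall>k\<in>I. enat (n k) \<le> E I))"
proof -
  have "min_shocks d E \<in> upper_orthant d n \<longleftrightarrow>
      (\<forall>k\<in>{1..d}. enat (n k) \<le> Min (E ` {I. I \<subseteq> {1..d} \<and> k \<in> I}))"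
    by (auto simp: min_shocks_def upper_orthant_def space_law_space)
  also have "\<dots> \<longleftrightarrow> (\<forall>k\<in>{1..d}. \<forall>I. I \<subseteq> {1..d} \<and> k \<in> I \<longrightarrow> enat (n k) \<le> E I)"
    by (rule ball_cong[OF refl]) (rule le_Min_subsets_containing_iff)
  finally show ?thesis by blast
qed

lemma min_shocks_in_space_law_space: "min_shocks d E \<in> space (law_space d)"
  by (simp add: min_shocks_def space_law_space)

lemma emeasure_narrow_law_upper_orthant:
  assumes p: "\<forall>I. I \<subseteq> {1..d} \<and> I \<noteq> {} \<longrightarrow> 0 \<le> p I \<and> p I \<le> 1"
  shows "emeasure (narrow_law d p) (upper_orthant d n)
           = ennreal (\<Prod>I\<in>nonempty_subsets d. p I ^ (Max (n ` I) - 1))"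
proof -
  let ?P = "Pi_pmf (nonempty_subsets d) \<infinity> (\<lambda>I. geom_enat (p I))"
  define B where "B I = {e. enat (Max (n ` I)) \<le> e}" for I
  have Pi_B: "E \<in> Pi (nonempty_subsets d) B \<longleftrightarrow> (\<forall>I. I \<subseteq> {1..d} \<longrightarrow> (\<forall>k\<in>I. enat (n k) \<le> E I))"
    for E
  proof -
    have "E \<in> Pi (nonempty_subsets d) B \<longleftrightarrow> (\<forall>I\<in>nonempty_subsets d. \<forall>k\<in>I. enat (n k) \<le> E I)"
      unfolding Pi_iff B_def mem_Collect_eq
      by (intro ball_cong refl enat_Max_le_iff) (auto simp: nonempty_subsets_def intro: finite_subset)
    then show ?thesis unfolding nonempty_subsets_def by blast
  qed
  have "min_shocks d -` upper_orthant d n \<inter> space (measure_pmf ?P) = Pi (nonempty_subsets d) B"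
    by (rule set_eqI) (simp only: Pi_B min_shocks_in_upper_orthant_iff vimage_eq Int_iff
        space_measure_pmf UNIV_I simp_thms)
  then have "emeasure (narrow_law d p) (upper_orthant d n) = emeasure ?P (Pi (nonempty_subsets d) B)"
    unfolding narrow_law_def nonempty_subsets_def[symmetric] min_shocks_def[symmetric, abs_def]
    by (subst emeasure_distr) (auto simp: min_shocks_in_space_law_space upper_orthant_in_sets)
  also have "\<dots> = ennreal (\<Prod>I\<in>nonempty_subsets d. measure_pmf.prob (geom_enat (p I)) (B I))"
    by (simp add: measure_pmf.emeasure_eq_measure measure_Pi_pmf_Pi)
  also have "\<dots> = ennreal (\<Prod>I\<in>nonempty_subsets d. p I ^ (Max (n ` I) - 1))"
    using p by (intro arg_cong[where f = ennreal] prod.cong refl)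
      (auto simp: B_def nonempty_subsets_def prob_geom_enat_ge)
  finally show ?thesis .
qed

lemma (in prob_space) emeasure_stream_space_prefix:
  assumes A: "\<And>i. A i \<in> sets M"
  shows "emeasure (stream_space M) {\<omega>\<in>space (stream_space M). \<forall>i<m. \<omega> !! i \<in> A i}
           = (\<Prod>i<m. emeasure M (A i))"
  using A
proof (induction m arbitrary: A)
  case 0
  then show ?case using prob_space.emeasure_space_1[OF prob_space_stream_space] by simp
next
  case (Suc m)
  let ?S = "stream_space M"
  have meas: "{\<omega>\<in>space ?S. \<forall>i<k. \<omega> !! i \<in> B i} \<in> sets ?S" if "\<And>i. B i \<in> sets M" for k B
    using that by measurable
  have "emeasure ?S {\<omega>\<in>space ?S. \<forall>i<Suc m. \<omega> !! i \<in> A i}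
      = (\<integral>\<^sup>+t. emeasure ?S {x\<in>space ?S. t ## x \<in> {\<omega>\<in>space ?S. \<forall>i<Suc m. \<omega> !! i \<in> A i}} \<partial>M)"
    using Suc.prems by (intro emeasure_stream_space meas)
  also have "\<dots> = (\<integral>\<^sup>+t. indicator (A 0) t * emeasure ?S {x\<in>space ?S. \<forall>i<m. x !! i \<in> A (Suc i)} \<partial>M)"
  proof (intro nn_integral_cong)
    fix t assume "t \<in> space M"
    then have "{x\<in>space ?S. t ## x \<in> {\<omega>\<in>space ?S. \<forall>i<Suc m. \<omega> !! i \<in> A i}}
       = (if t \<in> A 0 then {x\<in>space ?S. \<forall>i<m. x !! i \<in> A (Suc i)} else {})"
      by (auto simp: space_stream_space All_less_Suc2)
    then show "emeasure ?S {x\<in>space ?S. t ## x \<in> {\<omega>\<in>space ?S. \<forall>i<Suc m. \<omega> !! i \<in> A i}} =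
         indicator (A 0) t * emeasure ?S {x\<in>space ?S. \<forall>i<m. x !! i \<in> A (Suc i)}"
      by (simp add: indicator_def)
  qed
  also have "\<dots> = emeasure M (A 0) * (\<Prod>i<m. emeasure M (A (Suc i)))"
    using Suc by (simp add: nn_integral_multc)
  also have "\<dots> = (\<Prod>i<Suc m. emeasure M (A i))"
    by (rule prod.lessThan_Suc_shift[symmetric])
  finally show ?case .
qed

lemma pmf_trial_pmf:
  assumes "wide_params d q"
  shows "pmf (trial_pmf d q) I = (if I \<subseteq> {1..d} then q I else 0)"
proof -
  let ?f = "\<lambda>I. if I \<subseteq> {1..d} then q I else 0"
  have nonneg: "\<And>I. 0 \<le> ?f I" using assms by (auto simp: wide_params_def)
  have "(\<integral>\<^sup>+I. ennreal (?f I) \<partial>count_space UNIV) = (\<Sum>I\<in>Pow {1..d}. ennreal (?f I))"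
    by (rule nn_integral_count_space') auto
  also have "\<dots> = ennreal (\<Sum>I\<in>Pow {1..d}. q I)"
    using assms by (subst sum_ennreal) (auto simp: wide_params_def intro!: arg_cong[where f = ennreal] sum.cong)
  also have "\<dots> = 1" using assms by (simp add: wide_params_def)
  finally show ?thesis unfolding trial_pmf_def using nonneg by (subst pmf_embed_pmf) auto
qed

lemma emeasure_trial_pmf:
  assumes "wide_params d q"
  shows "emeasure (trial_pmf d q) A = ennreal (\<Sum>I\<in>{I\<in>Pow {1..d}. I \<in> A}. q I)"
proof -
  let ?M = "trial_pmf d q"
  have "set_pmf ?M \<subseteq> Pow {1..d}"
    using pmf_trial_pmf[OF assms] by (force simp: set_pmf_iff split: if_splits)
  then have "A \<inter> set_pmf ?M = {I\<in>Pow {1..d}. I \<in> A} \<inter> set_pmf ?M" by auto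
  then have "emeasure ?M A = emeasure ?M {I\<in>Pow {1..d}. I \<in> A}"
    by (metis emeasure_Int_set_pmf)
  also have "\<dots> = (\<Sum>I\<in>{I\<in>Pow {1..d}. I \<in> A}. ennreal (pmf ?M I))"
    by (subst emeasure_measure_pmf_finite) auto
  also have "\<dots> = ennreal (\<Sum>I\<in>{I\<in>Pow {1..d}. I \<in> A}. q I)"
    using assms by (subst sum_ennreal[symmetric])
      (auto simp: wide_params_def pmf_trial_pmf intro!: sum.cong)
  finally show ?thesis .
qed

lemma first_occ_ge_iff: "enat a \<le> first_occ \<omega> I \<longleftrightarrow> (\<forall>i. Suc i < a \<longrightarrow> \<omega> !! i \<noteq> I)"
proof (cases "\<exists>n. \<omega> !! n = I")
  case True
  let ?l = "LEAST n. \<omega> !! n = I"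
  have "(\<forall>i. Suc i < a \<longrightarrow> \<omega> !! i \<noteq> I) \<longleftrightarrow> a \<le> Suc ?l"
  proof
    assume "\<forall>i. Suc i < a \<longrightarrow> \<omega> !! i \<noteq> I"
    moreover have "\<omega> !! ?l = I" using True by (rule LeastI_ex)
    ultimately show "a \<le> Suc ?l" by (meson not_le)
  next
    assume "a \<le> Suc ?l"
    then show "\<forall>i. Suc i < a \<longrightarrow> \<omega> !! i \<noteq> I"
      using not_less_Least[of _ "\<lambda>n. \<omega> !! n = I"] by auto
  qed
  moreover have "first_occ \<omega> I = enat (Suc ?l)" using True by (simp add: first_occ_def)
  ultimately show ?thesis by simp
next
  case False
  then show ?thesis by (simp add: first_occ_def)
qed

lemma pred_first_occ_ge [measurable]:
  "Measurable.pred (stream_space (measure_pmf M)) (\<lambda>\<omega>. enat a \<le> first_occ \<omega> I)"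
  unfolding first_occ_ge_iff by measurable

lemma pred_first_occ_eq [measurable]:
  "Measurable.pred (stream_space (measure_pmf M)) (\<lambda>\<omega>. first_occ \<omega> I = e)"
proof (cases e)
  case (enat j)
  then have "(\<lambda>\<omega>. first_occ \<omega> I = e) = (\<lambda>\<omega>. enat j \<le> first_occ \<omega> I \<and> \<not> enat (Suc j) \<le> first_occ \<omega> I)"
    by (auto simp: fun_eq_iff Suc_ile_eq)
  then show ?thesis by simp
next
  case infinity
  then have "(\<lambda>\<omega>. first_occ \<omega> I = e) = (\<lambda>\<omega>. \<forall>m. enat m \<le> first_occ \<omega> I)"
    by (simp add: fun_eq_iff all_enat_le_iff)
  then show ?thesis by simp
qed

lemma wide_law_eq_distr_min_shocks:
  "wide_law d q = distr (stream_space (trial_pmf d q)) (law_space d) (\<lambda>\<omega>. min_shocks d (first_occ \<omega>))"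
  by (simp add: wide_law_def min_shocks_def)

text \<open>\<open>min_shocks d\<close> only reads its argument on \<open>Pow {1..d}\<close>, so the map factors through the
  countable set of restricted first-occurrence vectors, whose level sets are measurable.\<close>
lemma measurable_min_shocks_first_occ:
  "(\<lambda>\<omega>. min_shocks d (first_occ \<omega>)) \<in> measurable (stream_space (measure_pmf M)) (law_space d)"
proof -
  let ?S = "stream_space (measure_pmf M)" and ?C = "PiE (Pow {1..d}) (\<lambda>_. UNIV :: enat set)"
  define t where "t \<omega> = restrict (first_occ \<omega>) (Pow {1..d})" for \<omega>
  have countable: "countable ?C" by (intro countable_PiE) auto
  have t: "t \<in> measurable ?S (count_space ?C)"
  proof (subst measurable_count_space_eq_countable[OF countable], intro conjI ballI)
    show "t \<in> space ?S \<rightarrow> ?C" by (auto simp: t_def)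
  next
    fix e assume "e \<in> ?C"
    then have "t -` {e} \<inter> space ?S = {\<omega>\<in>space ?S. \<forall>I\<in>Pow {1..d}. first_occ \<omega> I = e I}"
      by (auto simp: t_def PiE_iff extensional_def fun_eq_iff)
    also have "\<dots> \<in> sets ?S" by measurable
    finally show "t -` {e} \<inter> space ?S \<in> sets ?S" .
  qed
  have "min_shocks d \<in> measurable (count_space ?C) (law_space d)"
    by (simp add: min_shocks_in_space_law_space)
  moreover have "min_shocks d \<circ> t = (\<lambda>\<omega>. min_shocks d (first_occ \<omega>))"
    by (auto simp: fun_eq_iff min_shocks_def t_def intro!: restrict_ext arg_cong[where f = Min])
  ultimately show ?thesis using measurable_comp[OF t] by metis
qed

text \<open>No trial numbered \<open>i + 1 < n\<^sub>k\<close> may hit coordinate \<open>k\<close>, so only the first \<open>\<Sum>\<^sub>k n\<^sub>k\<close> trials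
  are constrained.\<close>
lemma min_shocks_first_occ_in_upper_orthant_iff:
  assumes "m \<ge> (\<Sum>k\<in>{1..d}. n k)"
  shows "min_shocks d (first_occ \<omega>) \<in> upper_orthant d n \<longleftrightarrow>
           (\<forall>i<m. \<omega> !! i \<in> {I. I \<subseteq> {1..d} \<longrightarrow> (\<forall>k\<in>I. n k \<le> Suc i)})"
  unfolding min_shocks_in_upper_orthant_iff first_occ_ge_iff
proof (intro iffI allI impI ballI CollectI notI)
  fix i k assume "\<forall>I. I \<subseteq> {1..d} \<longrightarrow> (\<forall>k\<in>I. \<forall>i. Suc i < n k \<longrightarrow> \<omega> !! i \<noteq> I)"
    and "\<omega> !! i \<subseteq> {1..d}" "k \<in> \<omega> !! i"
  then show "n k \<le> Suc i" using not_less by blast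
next
  fix I k i assume "\<forall>i<m. \<omega> !! i \<in> {I. I \<subseteq> {1..d} \<longrightarrow> (\<forall>k\<in>I. n k \<le> Suc i)}"
    and I: "I \<subseteq> {1..d}" "k \<in> I" and "Suc i < n k" and "\<omega> !! i = I"
  moreover have "i < m"
    using assms I \<open>Suc i < n k\<close> member_le_sum[of k "{1..d}" n] by fastforce
  ultimately show False by fastforce
qed

lemma emeasure_wide_law_upper_orthant:
  assumes q: "wide_params d q"
  shows "emeasure (wide_law d q) (upper_orthant d n) =
    ennreal (\<Prod>i<(\<Sum>k\<in>{1..d}. n k). \<Sum>I\<in>{I\<in>Pow {1..d}. \<forall>k\<in>I. n k \<le> Suc i}. q I)"
proof -
  let ?M = "measure_pmf (trial_pmf d q)"
  let ?S = "stream_space ?M"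
  let ?m = "\<Sum>k\<in>{1..d}. n k"
  define A where "A i = {I. I \<subseteq> {1..d} \<longrightarrow> (\<forall>k\<in>I. n k \<le> Suc i)}" for i
  have "(\<lambda>\<omega>. min_shocks d (first_occ \<omega>)) -` upper_orthant d n \<inter> space ?S
      = {\<omega>\<in>space ?S. \<forall>i<?m. \<omega> !! i \<in> A i}"
    using min_shocks_first_occ_in_upper_orthant_iff[OF order_refl] by (auto simp: A_def)
  then have "emeasure (wide_law d q) (upper_orthant d n) = emeasure ?S {\<omega>\<in>space ?S. \<forall>i<?m. \<omega> !! i \<in> A i}"
    unfolding wide_law_eq_distr_min_shocks
    by (simp add: emeasure_distr measurable_min_shocks_first_occ upper_orthant_in_sets)
  also have "\<dots> = (\<Prod>i<?m. emeasure ?M (A i))"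
    by (simp add: measure_pmf.emeasure_stream_space_prefix)
  also have "\<dots> = (\<Prod>i<?m. ennreal (\<Sum>I\<in>{I\<in>Pow {1..d}. \<forall>k\<in>I. n k \<le> Suc i}. q I))"
    by (intro prod.cong refl) (auto simp: emeasure_trial_pmf[OF q] A_def
        intro!: arg_cong[where f = ennreal] sum.cong)
  also have "\<dots> = ennreal (\<Prod>i<?m. \<Sum>I\<in>{I\<in>Pow {1..d}. \<forall>k\<in>I. n k \<le> Suc i}. q I)"
    using q by (intro prod_ennreal sum_nonneg) (auto simp: wide_params_def)
  finally show ?thesis .
qed

lemma sets_wide_law: "sets (wide_law d q) = sets (law_space d)"
  by (simp add: wide_law_def)

lemma space_wide_law: "space (wide_law d q) = space (law_space d)"
  by (simp add: wide_law_def)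

lemma prob_space_wide_law: "prob_space (wide_law d q)"
  unfolding wide_law_eq_distr_min_shocks
  by (intro prob_space.prob_space_distr prob_space.prob_space_stream_space
      prob_space_measure_pmf measurable_min_shocks_first_occ)

text \<open>Trial outcome of a narrow-sense law: at each time step every shock \<open>J\<close> fires independently
  with probability \<open>1 - p J\<close>, and the outcome is the union \<open>\<Union>F\<close> of the set \<open>F\<close> of fired shocks.\<close>
definition firing_weight :: "nat \<Rightarrow> (nat set \<Rightarrow> real) \<Rightarrow> nat set set \<Rightarrow> real" where
  "firing_weight d p F = (\<Prod>J\<in>F. 1 - p J) * (\<Prod>J\<in>nonempty_subsets d - F. p J)"

definition wide_of_narrow :: "nat \<Rightarrow> (nat set \<Rightarrow> real) \<Rightarrow> nat set \<Rightarrow> real" where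
  "wide_of_narrow d p I = (\<Sum>F\<in>{F\<in>Pow (nonempty_subsets d). \<Union>F = I}. firing_weight d p F)"

lemma wide_of_narrow_nonneg:
  assumes "\<forall>I. I \<subseteq> {1..d} \<and> I \<noteq> {} \<longrightarrow> 0 \<le> p I \<and> p I \<le> 1"
  shows "0 \<le> wide_of_narrow d p I"
  unfolding wide_of_narrow_def firing_weight_def using assms
  by (intro sum_nonneg mult_nonneg_nonneg prod_nonneg) (auto simp: nonempty_subsets_def)

text \<open>The outcome lies in \<open>T\<close> iff no shock outside \<open>T\<close> fires.\<close>
lemma sum_wide_of_narrow_subsets:
  "(\<Sum>I\<in>{I\<in>Pow {1..d}. I \<subseteq> T}. wide_of_narrow d p I)
     = (\<Prod>J\<in>{J\<in>nonempty_subsets d. \<not> J \<subseteq> T}. p J)"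
proof -
  let ?N = "nonempty_subsets d"
  define NT where "NT = {J\<in>?N. J \<subseteq> T}"
  have "(\<Sum>I\<in>{I\<in>Pow {1..d}. I \<subseteq> T}. wide_of_narrow d p I)
      = (\<Sum>I\<in>{I\<in>Pow {1..d}. I \<subseteq> T}. \<Sum>F\<in>{F. F \<in> {F\<in>Pow ?N. \<Union>F \<subseteq> T} \<and> \<Union>F = I}. firing_weight d p F)"
    unfolding wide_of_narrow_def by (intro sum.cong refl arg_cong2[where f = sum]) auto
  also have "\<dots> = (\<Sum>F\<in>{F\<in>Pow ?N. \<Union>F \<subseteq> T}. firing_weight d p F)"
    by (rule sum.group) (auto simp: nonempty_subsets_def intro: finite_subset[of _ "Pow ?N"])
  also have "{F\<in>Pow ?N. \<Union>F \<subseteq> T} = Pow NT" by (auto simp: NT_def)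
  also have "(\<Sum>F\<in>Pow NT. firing_weight d p F)
      = (\<Sum>F\<in>Pow NT. (\<Prod>J\<in>F. 1 - p J) * (\<Prod>J\<in>NT - F. p J)) * (\<Prod>J\<in>?N - NT. p J)"
  proof -
    have "firing_weight d p F = (\<Prod>J\<in>F. 1 - p J) * (\<Prod>J\<in>NT - F. p J) * (\<Prod>J\<in>?N - NT. p J)"
      if "F \<subseteq> NT" for F
    proof -
      have "?N - F = (NT - F) \<union> (?N - NT)" using that by (auto simp: NT_def)
      then have "(\<Prod>J\<in>?N - F. p J) = (\<Prod>J\<in>NT - F. p J) * (\<Prod>J\<in>?N - NT. p J)"
        by (simp add: prod.union_disjoint NT_def Diff_Int_distrib2)
      then show ?thesis by (simp add: firing_weight_def mult.assoc)
    qed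
    then show ?thesis by (simp add: sum_distrib_right)
  qed
  also have "(\<Sum>F\<in>Pow NT. (\<Prod>J\<in>F. 1 - p J) * (\<Prod>J\<in>NT - F. p J)) = (\<Prod>J\<in>NT. (1 - p J) + p J)"
    by (rule prod_add[symmetric]) (simp add: NT_def)
  also have "?N - NT = {J\<in>?N. \<not> J \<subseteq> T}" by (auto simp: NT_def)
  finally show ?thesis by simp
qed

lemma wide_params_wide_of_narrow:
  assumes "narrow_params d p"
  shows "wide_params d (wide_of_narrow d p)"
proof -
  have p: "\<forall>I. I \<subseteq> {1..d} \<and> I \<noteq> {} \<longrightarrow> 0 \<le> p I \<and> p I \<le> 1"
    using assms by (simp add: narrow_params_def)
  have no_shock_outside: "{J\<in>nonempty_subsets d. \<not> J \<subseteq> {1..d}} = {}"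
    by (auto simp: nonempty_subsets_def)
  have total: "(\<Sum>I\<in>Pow {1..d}. wide_of_narrow d p I) = 1"
    using sum_wide_of_narrow_subsets[where d = d and p = p and T = "{1..d}",
        unfolded no_shock_outside prod.empty]
    by (simp add: Pow_def)
  have "wide_of_narrow d p I \<le> 1" if "I \<subseteq> {1..d}" for I
    using that wide_of_narrow_nonneg[OF p] total member_le_sum[of I "Pow {1..d}" "wide_of_narrow d p"]
    by auto
  moreover have "(\<Sum>I\<in>{I. I \<subseteq> {1..d} \<and> k \<notin> I}. wide_of_narrow d p I) < 1" if "k \<in> {1..d}" for k
  proof -
    have "{I\<in>Pow {1..d}. I \<subseteq> {1..d} - {k}} = {I. I \<subseteq> {1..d} \<and> k \<notin> I}" by auto
    moreover have "{J\<in>nonempty_subsets d. \<not> J \<subseteq> {1..d} - {k}} = {I. I \<subseteq> {1..d} \<and> k \<in> I}"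
      by (auto simp: nonempty_subsets_def)
    ultimately show ?thesis
      using sum_wide_of_narrow_subsets[where d = d and p = p and T = "{1..d} - {k}"] assms that
      by (simp add: narrow_params_def)
  qed
  ultimately show ?thesis
    unfolding wide_params_def using wide_of_narrow_nonneg[OF p] total by auto
qed

text \<open>Counting, for each shock \<open>J\<close>, the trials \<open>i < \<Sum>\<^sub>k n\<^sub>k\<close> at which it is still forbidden to fire.\<close>
lemma prod_forbidden_shocks_eq:
  fixes n :: "nat \<Rightarrow> nat"
  shows "(\<Prod>i<(\<Sum>k\<in>{1..d}. n k). \<Prod>J\<in>{J\<in>nonempty_subsets d. \<not> J \<subseteq> {k. n k \<le> Suc i}}. p J)
       = (\<Prod>J\<in>nonempty_subsets d. p J ^ (Max (n ` J) - 1))"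
proof -
  let ?m = "\<Sum>k\<in>{1..d}. n k"
  have "(\<Prod>i<?m. \<Prod>J\<in>{J\<in>nonempty_subsets d. \<not> J \<subseteq> {k. n k \<le> Suc i}}. p J)
      = (\<Prod>J\<in>nonempty_subsets d. \<Prod>i<?m. if \<not> J \<subseteq> {k. n k \<le> Suc i} then p J else 1)"
    by (subst prod.swap) (simp add: prod.inter_filter)
  also have "\<dots> = (\<Prod>J\<in>nonempty_subsets d. p J ^ (Max (n ` J) - 1))"
  proof (intro prod.cong refl)
    fix J assume J: "J \<in> nonempty_subsets d"
    then have "finite J" "J \<noteq> {}" by (auto simp: nonempty_subsets_def intro: finite_subset)
    moreover have "n k \<le> ?m" if "k \<in> J" for k
      using that J member_le_sum[of k "{1..d}" n] by (auto simp: nonempty_subsets_def)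
    ultimately have "Max (n ` J) \<le> ?m" by simp
    moreover have "\<not> J \<subseteq> {k. n k \<le> Suc i} \<longleftrightarrow> Suc i < Max (n ` J)" for i
      using \<open>finite J\<close> \<open>J \<noteq> {}\<close> by (auto simp: Max_gr_iff not_le)
    ultimately have "{i\<in>{..<?m}. \<not> J \<subseteq> {k. n k \<le> Suc i}} = {..<Max (n ` J) - 1}"
      by auto
    then show "(\<Prod>i<?m. if \<not> J \<subseteq> {k. n k \<le> Suc i} then p J else 1) = p J ^ (Max (n ` J) - 1)"
      by (simp add: prod.inter_filter[symmetric])
  qed
  finally show ?thesis .
qed

lemma narrow_law_eq_wide_law:
  assumes p: "narrow_params d p"
  shows "narrow_law d p = wide_law d (wide_of_narrow d p)"
proof (rule law_space_measure_eqI)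
  have p01: "\<forall>I. I \<subseteq> {1..d} \<and> I \<noteq> {} \<longrightarrow> 0 \<le> p I \<and> p I \<le> 1"
    using p by (simp add: narrow_params_def)
  show "emeasure (narrow_law d p) (space (law_space d)) \<noteq> \<infinity>"
    using emeasure_narrow_law_upper_orthant[OF p01, of "\<lambda>_. 0"] by (simp add: upper_orthant_0)
  fix n
  have "(\<Sum>I\<in>{I\<in>Pow {1..d}. \<forall>k\<in>I. n k \<le> Suc i}. wide_of_narrow d p I)
      = (\<Prod>J\<in>{J\<in>nonempty_subsets d. \<not> J \<subseteq> {k. n k \<le> Suc i}}. p J)" for i
    using sum_wide_of_narrow_subsets[where d = d and p = p and T = "{k. n k \<le> Suc i}"]
    by (simp only: subset_iff mem_Collect_eq Ball_def)
  then show "emeasure (narrow_law d p) (upper_orthant d n) =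
      emeasure (wide_law d (wide_of_narrow d p)) (upper_orthant d n)"
    by (simp only: emeasure_narrow_law_upper_orthant[OF p01] prod_forbidden_shocks_eq
        emeasure_wide_law_upper_orthant[OF wide_params_wide_of_narrow[OF p]])
qed (simp_all add: narrow_law_def wide_law_def)

lemma is_narrow_law_imp_is_wide_law: "is_narrow_law d L \<Longrightarrow> is_wide_law d L"
  unfolding is_narrow_law_def is_wide_law_def
  using narrow_law_eq_wide_law wide_params_wide_of_narrow by blast

lemma ennreal_the_enat_eq_suminf:
  assumes "e \<noteq> \<infinity>"
  shows "ennreal (real (the_enat e)) = (\<Sum>a. indicator {y. enat a < y} e)"
proof -
  obtain s where e: "e = enat s" using assms by auto
  have "(\<Sum>a. indicator {y. enat a < y} e :: ennreal) = (\<Sum>a<s. 1)"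
    using e by (subst suminf_finite[of "{..<s}"]) (auto simp: indicator_def)
  then show ?thesis using e by (simp add: ennreal_of_nat_eq_real_of_nat)
qed

context
  fixes M :: "(nat \<Rightarrow> enat) measure" and d :: nat
  assumes sets_M: "sets M = sets (law_space d)"
begin

lemma borel_measurable_law_space: "f \<in> borel_measurable M"
  by (rule measurable_from_law_space[OF sets_M]) simp

lemma sets_law_space_Collect: "{x\<in>space M. P x} \<in> sets M"
  using sets_M sets_eq_imp_space_eq[OF sets_M] by (auto simp: sets_law_space)

lemma nn_integral_coord_eq_suminf:
  assumes "AE x in M. x i \<noteq> \<infinity>"
  shows "(\<integral>\<^sup>+x. ennreal (real (the_enat (x i))) \<partial>M) = (\<Sum>a. emeasure M {x\<in>space M. enat a < x i})"
proof -
  have "(\<integral>\<^sup>+x. ennreal (real (the_enat (x i))) \<partial>M)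
      = (\<integral>\<^sup>+x. (\<Sum>a. indicator {x\<in>space M. enat a < x i} x) \<partial>M)"
    using assms by (intro nn_integral_cong_AE) (auto simp: ennreal_the_enat_eq_suminf indicator_def)
  also have "\<dots> = (\<Sum>a. emeasure M {x\<in>space M. enat a < x i})"
    by (simp add: nn_integral_suminf borel_measurable_law_space sets_law_space_Collect)
  finally show ?thesis .
qed

lemma nn_integral_coord_mult_eq_suminf:
  assumes "AE x in M. x i \<noteq> \<infinity> \<and> x j \<noteq> \<infinity>"
  shows "(\<integral>\<^sup>+x. ennreal (real (the_enat (x i)) * real (the_enat (x j))) \<partial>M)
       = (\<Sum>a. \<Sum>b. emeasure M {x\<in>space M. enat a < x i \<and> enat b < x j})"
proof -
  let ?A = "\<lambda>a b. {x\<in>space M. enat a < x i \<and> enat b < x j}"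
  have "ennreal (real (the_enat (x i)) * real (the_enat (x j))) = (\<Sum>a. \<Sum>b. indicator (?A a b) x)"
    if "x \<in> space M" "x i \<noteq> \<infinity>" "x j \<noteq> \<infinity>" for x
  proof -
    have "ennreal (real (the_enat (x i)) * real (the_enat (x j)))
        = ennreal (real (the_enat (x i))) * ennreal (real (the_enat (x j)))"
      by (simp add: ennreal_mult)
    also have "\<dots> = (\<Sum>a. indicator {y. enat a < y} (x i)) * (\<Sum>b. indicator {y. enat b < y} (x j))"
      by (simp only: ennreal_the_enat_eq_suminf[OF that(2)] ennreal_the_enat_eq_suminf[OF that(3)])
    also have "\<dots> = (\<Sum>a. indicator {y. enat a < y} (x i) * (\<Sum>b. indicator {y. enat b < y} (x j)))"
      by (rule ennreal_suminf_multc[symmetric])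
    also have "\<dots> = (\<Sum>a. \<Sum>b. indicator {y. enat a < y} (x i) * indicator {y. enat b < y} (x j))"
      by (simp only: ennreal_suminf_cmult)
    also have "\<dots> = (\<Sum>a. \<Sum>b. indicator (?A a b) x)"
      using that(1) by (intro suminf_cong) (simp add: indicator_def)
    finally show ?thesis .
  qed
  then have "(\<integral>\<^sup>+x. ennreal (real (the_enat (x i)) * real (the_enat (x j))) \<partial>M)
      = (\<integral>\<^sup>+x. (\<Sum>a. \<Sum>b. indicator (?A a b) x) \<partial>M)"
    using assms by (intro nn_integral_cong_AE) auto
  also have "\<dots> = (\<Sum>a. \<Sum>b. emeasure M (?A a b))"
    by (simp add: nn_integral_suminf borel_measurable_law_space sets_law_space_Collect)
  finally show ?thesis .
qed

lemma AE_coord_finite: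
  assumes "prob_space M" and "(\<lambda>a. measure M {x\<in>space M. enat a < x j}) \<longlonglongrightarrow> 0"
  shows "AE x in M. x j \<noteq> \<infinity>"
proof -
  interpret prob_space M by fact
  let ?N = "{x\<in>space M. x j = \<infinity>}"
  have "measure M ?N \<le> measure M {x\<in>space M. enat a < x j}" for a
    by (intro finite_measure_mono sets_law_space_Collect) auto
  then have "measure M ?N \<le> 0"
    using assms(2) by (intro LIMSEQ_le_const) auto
  then have "emeasure M ?N = 0"
    by (simp add: emeasure_eq_measure sets_law_space_Collect measure_le_0_iff)
  then show ?thesis by (intro AE_I[OF _ _ sets_law_space_Collect]) auto
qed

end

lemma suminf_ennreal_double:
  assumes inner: "\<And>a. (\<lambda>b. f a b) sums c a" and outer: "c sums s"
    and nonneg: "\<And>a b. 0 \<le> f a b"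
  shows "(\<Sum>a. \<Sum>b. ennreal (f a b)) = ennreal s"
proof -
  have "0 \<le> c a" for a
    using sums_le[OF _ sums_zero inner[of a]] nonneg by simp
  moreover have "(\<Sum>b. ennreal (f a b)) = ennreal (c a)" for a
    using nonneg inner by (rule suminf_ennreal_eq)
  then have "(\<Sum>a. \<Sum>b. ennreal (f a b)) = (\<Sum>a. ennreal (c a))" by simp
  ultimately show ?thesis using outer by (simp only: suminf_ennreal_eq)
qed

lemma (in prob_space) integral_centered_mult:
  fixes U V :: "'a \<Rightarrow> real"
  assumes "has_bochner_integral M U \<mu>" "has_bochner_integral M V \<nu>"
    and "has_bochner_integral M (\<lambda>x. U x * V x) r"
  shows "(\<integral>x. (U x - \<mu>) * (V x - \<nu>) \<partial>M) = r - \<mu> * \<nu>"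
proof -
  have const: "has_bochner_integral M (\<lambda>_. \<mu> * \<nu>) (\<mu> * \<nu>)"
    using lebesgue_integral_const[of M "\<mu> * \<nu>"] prob_space by (simp add: has_bochner_integral_iff)
  have "has_bochner_integral M (\<lambda>x. U x * V x - \<nu> * U x - \<mu> * V x + \<mu> * \<nu>)
      (r - \<nu> * \<mu> - \<mu> * \<nu> + \<mu> * \<nu>)"
    using assms(1,2)
    by (intro has_bochner_integral_add[OF has_bochner_integral_diff[OF has_bochner_integral_diff
          [OF assms(3)]] const] has_bochner_integral_mult_right)
  then show ?thesis
    by (simp add: has_bochner_integral_integral_eq algebra_simps)
qed

lemma (in prob_space) correlation_eq:
  fixes U V :: "'a \<Rightarrow> real"
  assumes U: "has_bochner_integral M U \<mu>" and V: "has_bochner_integral M V \<nu>"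
    and "has_bochner_integral M (\<lambda>x. U x * V x) r"
    and "has_bochner_integral M (\<lambda>x. U x * U x) s"
    and "has_bochner_integral M (\<lambda>x. V x * V x) t"
  shows "correlation M U V = (r - \<mu> * \<nu>) / sqrt ((s - \<mu>\<^sup>2) * (t - \<nu>\<^sup>2))"
  using assms integral_centered_mult[OF U U] integral_centered_mult[OF V V] integral_centered_mult[OF U V]
  by (simp add: correlation_def has_bochner_integral_integral_eq power2_eq_square)

definition example_params :: "nat set \<Rightarrow> real" where
  "example_params I = (if card I = 1 then 3/10 else 1/5)"

definition example_law :: "(nat \<Rightarrow> enat) measure" where
  "example_law = wide_law 2 example_params"

lemma sets_example_law: "sets example_law = sets (law_space 2)"
  by (simp add: example_law_def sets_wide_law)

lemma space_example_law: "space example_law = space (law_space 2)"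
  by (simp add: example_law_def space_wide_law)

lemma prob_space_example_law: "prob_space example_law"
  by (simp add: example_law_def prob_space_wide_law)

definition example_survival :: "nat \<Rightarrow> nat \<Rightarrow> real" where
  "example_survival u v = (1/2) ^ max u v * (2/5) ^ min u v"

lemma example_survival_nonneg: "0 \<le> example_survival u v"
  by (simp add: example_survival_def)

lemma example_survival_commute: "example_survival u v = example_survival v u"
  by (simp add: example_survival_def max.commute min.commute)

lemma example_survival_eq_prod: "example_survival u v = (1/2) ^ u * (1/2) ^ v * (4/5) ^ min u v"
proof -
  have "(1/2::real) ^ max u v * (2/5) ^ min u v = (1/2) ^ max u v * ((1/2) ^ min u v * (4/5) ^ min u v)"
    by (simp add: power_mult_distrib[symmetric])
  also have "\<dots> = (1/2) ^ u * (1/2) ^ v * (4/5) ^ min u v"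
    by (cases "u \<le> v") (simp_all add: max_def min_def)
  finally show ?thesis by (simp add: example_survival_def)
qed

lemma Pow_two: "Pow {1..2::nat} = {{}, {1}, {2}, {1,2}}"
proof -
  have "{1..2::nat} = {1,2}" by auto
  then show ?thesis by (auto simp: Pow_insert)
qed

lemma sum_Pow_two: "(\<Sum>I\<in>Pow {1..2::nat}. h I) = h {} + h {1} + h {2} + h {1,2}"
  unfolding Pow_two by (simp add: add.assoc)

lemma wide_params_example_params: "wide_params 2 example_params"
proof -
  have "(\<Sum>I\<in>{I. I \<subseteq> {1..2} \<and> k \<notin> I}. example_params I) < 1" if "k \<in> {1..2::nat}" for k
  proof -
    have "(\<Sum>I\<in>{I. I \<subseteq> {1..2} \<and> k \<notin> I}. example_params I)
        = (\<Sum>I\<in>Pow {1..2::nat}. if k \<notin> I then example_params I else 0)"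
      by (simp add: sum.inter_filter[symmetric] Pow_def)
    also have "\<dots> = 1/2"
      unfolding sum_Pow_two using that by (cases "k = 1") (auto simp: example_params_def)
    finally show ?thesis by simp
  qed
  then show ?thesis
    unfolding wide_params_def sum_Pow_two by (auto simp: example_params_def)
qed

lemma prod_if_less_eq_power: "u \<le> N \<Longrightarrow> (\<Prod>i<N. if i < u then c else 1) = c ^ u"
proof -
  assume "u \<le> N"
  then have "{i\<in>{..<N}. i < u} = {..<u}" by auto
  then show ?thesis by (simp add: prod.inter_filter[symmetric])
qed

lemma emeasure_example_law_upper_orthant:
  "emeasure example_law (upper_orthant 2 n) = ennreal (example_survival (n 1 - 1) (n 2 - 1))"
proof -
  let ?u = "n 1 - 1" and ?v = "n 2 - 1" and ?N = "\<Sum>k\<in>{1..2::nat}. n k"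
  have N: "?N = n 1 + n 2" by (simp add: numeral_2_eq_2)
  have trial: "(\<Sum>I\<in>{I\<in>Pow {1..2}. \<forall>k\<in>I. n k \<le> Suc i}. example_params I)
      = (if i < ?u then 1/2 else 1) * (if i < ?v then 1/2 else 1) * (if i < min ?u ?v then 4/5 else 1)"
    for i
  proof -
    have "(\<Sum>I\<in>{I\<in>Pow {1..2}. \<forall>k\<in>I. n k \<le> Suc i}. example_params I)
        = (\<Sum>I\<in>Pow {1..2::nat}. if \<forall>k\<in>I. n k \<le> Suc i then example_params I else 0)"
      by (simp add: sum.inter_filter[symmetric])
    then show ?thesis unfolding sum_Pow_two by (auto simp: example_params_def)
  qed
  have "emeasure example_law (upper_orthant 2 n) = ennreal (\<Prod>i<?N.
      (if i < ?u then 1/2 else 1) * (if i < ?v then 1/2 else 1) * (if i < min ?u ?v then 4/5 else 1))"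
    unfolding example_law_def emeasure_wide_law_upper_orthant[OF wide_params_example_params] trial ..
  also have "\<dots> = ennreal ((1/2) ^ ?u * (1/2) ^ ?v * (4/5) ^ min ?u ?v)"
    unfolding prod.distrib using N by (subst (1 2 3) prod_if_less_eq_power) auto
  finally show ?thesis by (simp add: example_survival_eq_prod)
qed

lemma upper_orthant_two:
  "upper_orthant 2 n = {x\<in>space (law_space 2). enat (n 1) \<le> x 1 \<and> enat (n 2) \<le> x 2}"
proof -
  have "{1..2::nat} = {1, 2}" by auto
  then show ?thesis by (simp add: upper_orthant_def)
qed

lemma emeasure_example_law_greater:
  "emeasure example_law {x\<in>space example_law. enat a < x 1 \<and> enat b < x 2} = ennreal (example_survival a b)"
proof -
  have "{x\<in>space example_law. enat a < x 1 \<and> enat b < x 2} = upper_orthant 2 (\<lambda>k. if k = 1 then Suc a else Suc b)"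
    by (auto simp: upper_orthant_two space_example_law Suc_ile_eq)
  then show ?thesis by (simp add: emeasure_example_law_upper_orthant)
qed

lemma measure_example_law_greater:
  "measure example_law {x\<in>space example_law. enat a < x 1 \<and> enat b < x 2} = example_survival a b"
  using emeasure_example_law_greater example_survival_nonneg by (simp add: measure_def)

lemma emeasure_example_law_greater_coord:
  assumes "j \<in> {1, 2}"
  shows "emeasure example_law {x\<in>space example_law. enat a < x j} = ennreal ((1/2) ^ a)"
proof -
  have "{x\<in>space example_law. enat a < x j} = upper_orthant 2 (\<lambda>k. if k = j then Suc a else 0)"
    using assms by (auto simp: upper_orthant_two space_example_law Suc_ile_eq enat_0)
  then show ?thesis using assms by (auto simp: emeasure_example_law_upper_orthant example_survival_def)
qed

lemma example_law_swap_invariant: "distr example_law example_law (\<lambda>x. x(1 := x 2, 2 := x 1)) = example_law"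
proof -
  let ?swap = "\<lambda>x::nat \<Rightarrow> enat. x(1 := x 2, 2 := x 1)"
  have swap: "?swap \<in> space example_law \<rightarrow> space example_law"
    by (auto simp: space_example_law space_law_space PiE_iff extensional_def)
  then have measurable: "?swap \<in> measurable example_law example_law"
    by (rule measurable_from_law_space[OF sets_example_law])
  have "example_law = distr example_law example_law ?swap"
  proof (rule law_space_measure_eqI[OF sets_example_law])
    show "emeasure example_law (space (law_space 2)) \<noteq> \<infinity>"
      using prob_space.emeasure_space_1[OF prob_space_example_law] by (simp add: space_example_law)
    fix n
    have "?swap -` upper_orthant 2 n \<inter> space example_law
        = {x\<in>space example_law. enat (n 1) \<le> ?swap x 1 \<and> enat (n 2) \<le> ?swap x 2}"
      using swap unfolding upper_orthant_two space_example_law by blast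
    also have "\<dots> = upper_orthant 2 (\<lambda>k. if k = 1 then n 2 else n 1)"
      unfolding upper_orthant_two space_example_law by auto
    finally have "?swap -` upper_orthant 2 n \<inter> space example_law = upper_orthant 2 (\<lambda>k. if k = 1 then n 2 else n 1)" .
    then show "emeasure example_law (upper_orthant 2 n) = emeasure (distr example_law example_law ?swap) (upper_orthant 2 n)"
      using measurable by (simp add: emeasure_distr sets_example_law upper_orthant_in_sets
          emeasure_example_law_upper_orthant example_survival_commute)
  qed (simp add: sets_example_law)
  then show ?thesis ..
qed

text \<open>A bivariate narrow-sense law has survival function \<open>p\<^sub>1 ^ u * p\<^sub>2 ^ v * p\<^sub>1\<^sub>2 ^ max u v\<close>;
  matching it at \<open>(1,0)\<close>, \<open>(0,1)\<close> and \<open>(1,1)\<close> forces \<open>p\<^sub>1\<^sub>2 = 5/4\<close>.\<close>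
lemma example_law_not_narrow: "\<not> is_narrow_law 2 example_law"
proof
  assume "is_narrow_law 2 example_law"
  then obtain p where p: "narrow_params 2 p" and example: "example_law = narrow_law 2 p"
    by (auto simp: is_narrow_law_def)
  have p01: "\<forall>I. I \<subseteq> {1..2} \<and> I \<noteq> {} \<longrightarrow> 0 \<le> p I \<and> p I \<le> 1"
    using p by (simp add: narrow_params_def)
  have "nonempty_subsets 2 = Pow {1..2} - {{}}" by (auto simp: nonempty_subsets_def)
  then have "nonempty_subsets 2 = {{1}, {2}, {1,2}}" unfolding Pow_two by auto
  then have prod: "(\<Prod>I\<in>nonempty_subsets 2. h I) = h {1} * h {2} * h {1,2}" for h :: "nat set \<Rightarrow> real"
    by (simp add: mult.assoc)
  have survival: "(\<Prod>I\<in>nonempty_subsets 2. p I ^ (Max (n ` I) - 1)) = example_survival (n 1 - 1) (n 2 - 1)"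
    for n
  proof -
    have "0 \<le> (\<Prod>I\<in>nonempty_subsets 2. p I ^ (Max (n ` I) - 1))"
      using p01 by (intro prod_nonneg) (auto simp: nonempty_subsets_def)
    then show ?thesis
      using emeasure_narrow_law_upper_orthant[OF p01, of n] emeasure_example_law_upper_orthant[of n]
        example_survival_nonneg example by simp
  qed
  have e1: "p {1} * p {1,2} = 1/2"
    using survival[of "\<lambda>k. if k = 1 then 2 else 1"] by (simp add: prod example_survival_def)
  have e2: "p {2} * p {1,2} = 1/2"
    using survival[of "\<lambda>k. if k = 1 then 1 else 2"] by (simp add: prod example_survival_def)
  have e12: "p {1} * p {2} * p {1,2} = 1/5"
    using survival[of "\<lambda>k. 2"] by (simp add: prod example_survival_def)
  have "p {1,2} * (p {1} * p {2} * p {1,2}) = (p {1} * p {1,2}) * (p {2} * p {1,2})"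
    by (simp add: algebra_simps)
  then have "p {1,2} = 5/4" unfolding e1 e2 e12 by simp
  moreover have "p {1,2} \<le> 1" using p01 by auto
  ultimately show False by simp
qed

lemma sums_example_survival_row: "(\<lambda>b. example_survival a b) sums ((5/3) * (1/2) ^ a + (1/3) * (1/5) ^ a)"
proof (induction a)
  case 0
  have "(\<lambda>b. (1/2::real) ^ b) sums 2" using geometric_sums[of "1/2::real"] by simp
  then show ?case by (simp add: example_survival_def)
next
  case (Suc a)
  have "(\<lambda>b. example_survival (Suc a) (Suc b)) = (\<lambda>b. example_survival a b / 5)"
    by (simp add: example_survival_def fun_eq_iff field_simps)
  then have "(\<lambda>b. example_survival (Suc a) (Suc b)) sums (((5/3) * (1/2) ^ a + (1/3) * (1/5) ^ a) / 5)"
    using sums_divide[OF Suc] by simp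
  then have "(\<lambda>b. example_survival (Suc a) b)
      sums (((5/3) * (1/2) ^ a + (1/3) * (1/5) ^ a) / 5 + example_survival (Suc a) 0)"
    by (simp only: sums_Suc_iff)
  then show ?case by (simp add: example_survival_def field_simps)
qed

lemma sums_half_power_max: "(\<lambda>b. (1/2::real) ^ max a b) sums ((real a + 2) * (1/2) ^ a)"
proof (induction a)
  case 0
  then show ?case using geometric_sums[of "1/2::real"] by simp
next
  case (Suc a)
  have "(\<lambda>b. (1/2::real) ^ max (Suc a) (Suc b)) sums ((real a + 2) * (1/2) ^ a / 2)"
    using sums_divide[OF Suc, of 2] by simp
  then have "(\<lambda>b. (1/2::real) ^ max (Suc a) b) sums ((real a + 2) * (1/2) ^ a / 2 + (1/2) ^ Suc a)"
    by (subst (asm) sums_Suc_iff[where f = "\<lambda>b. (1/2::real) ^ max (Suc a) b"]) simp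
  then show ?case by (simp add: field_simps)
qed

lemma sums_example_survival_rows: "(\<lambda>a. (5/3) * (1/2::real) ^ a + (1/3) * (1/5) ^ a) sums (15/4)"
proof -
  have "(\<lambda>a. (5/3) * (1/2::real) ^ a + (1/3) * (1/5) ^ a) sums ((5/3) * 2 + (1/3) * (5/4))"
    using geometric_sums[of "1/2::real"] geometric_sums[of "1/5::real"]
    by (intro sums_add sums_mult) simp_all
  then show ?thesis by simp
qed

lemma sums_half_power_max_rows: "(\<lambda>a. (real a + 2) * (1/2::real) ^ a) sums 6"
proof -
  have "(\<lambda>a. real (Suc a) * (1/2::real) ^ a) sums 4"
    using geometric_deriv_sums[of "1/2::real"] by (simp add: power2_eq_square)
  then have "(\<lambda>a. real (Suc a) * (1/2::real) ^ a + (1/2) ^ a) sums (4 + 2)"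
    using geometric_sums[of "1/2::real"] by (intro sums_add) simp_all
  then show ?thesis by (simp add: algebra_simps)
qed

lemma AE_example_law_finite:
  assumes "j \<in> {1, 2}"
  shows "AE x in example_law. x j \<noteq> \<infinity>"
proof (rule AE_coord_finite[OF sets_example_law])
  show "prob_space example_law" by (rule prob_space_example_law)
  have "measure example_law {x\<in>space example_law. enat a < x j} = (1/2) ^ a" for a
    using emeasure_example_law_greater_coord[OF assms, of a] by (simp add: measure_def)
  then show "(\<lambda>a. measure example_law {x\<in>space example_law. enat a < x j}) \<longlonglongrightarrow> 0"
    by (simp add: LIMSEQ_power_zero)
qed

lemma has_bochner_integral_example_law:
  assumes "\<And>x. 0 \<le> f x" and "(\<integral>\<^sup>+x. ennreal (f x) \<partial>example_law) = ennreal c" and "0 \<le> c"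
  shows "has_bochner_integral example_law f c"
  using assms by (intro has_bochner_integral_nn_integral borel_measurable_law_space[OF sets_example_law]) auto

lemma has_bochner_integral_example_law_coord:
  assumes "j \<in> {1, 2}"
  shows "has_bochner_integral example_law (\<lambda>x. real (the_enat (x j))) 2"
proof (rule has_bochner_integral_example_law)
  have "(\<integral>\<^sup>+x. ennreal (real (the_enat (x j))) \<partial>example_law) = (\<Sum>a. ennreal ((1/2) ^ a))"
    by (simp add: nn_integral_coord_eq_suminf[OF sets_example_law AE_example_law_finite[OF assms]]
        emeasure_example_law_greater_coord[OF assms])
  also have "\<dots> = ennreal 2"
    using geometric_sums[of "1/2::real"] by (intro suminf_ennreal_eq) simp_all
  finally show "(\<integral>\<^sup>+x. ennreal (real (the_enat (x j))) \<partial>example_law) = ennreal 2" .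
qed auto

lemma has_bochner_integral_example_law_square:
  assumes "j \<in> {1, 2}"
  shows "has_bochner_integral example_law (\<lambda>x. real (the_enat (x j)) * real (the_enat (x j))) 6"
proof (rule has_bochner_integral_example_law)
  have "{x\<in>space example_law. enat a < x j \<and> enat b < x j} = {x\<in>space example_law. enat (max a b) < x j}" for a b
    by (simp add: enat_max_less_iff)
  then have "(\<integral>\<^sup>+x. ennreal (real (the_enat (x j)) * real (the_enat (x j))) \<partial>example_law)
      = (\<Sum>a. \<Sum>b. ennreal ((1/2) ^ max a b))"
    using AE_example_law_finite[OF assms]
    by (simp add: nn_integral_coord_mult_eq_suminf[OF sets_example_law] emeasure_example_law_greater_coord[OF assms])
  also have "\<dots> = ennreal 6"
    by (rule suminf_ennreal_double[OF sums_half_power_max sums_half_power_max_rows]) simp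
  finally show "(\<integral>\<^sup>+x. ennreal (real (the_enat (x j)) * real (the_enat (x j))) \<partial>example_law) = ennreal 6" .
qed auto

lemma has_bochner_integral_example_law_cross:
  "has_bochner_integral example_law (\<lambda>x. real (the_enat (x 1)) * real (the_enat (x 2))) (15/4)"
proof (rule has_bochner_integral_example_law)
  have "AE x in example_law. x 1 \<noteq> \<infinity> \<and> x 2 \<noteq> \<infinity>"
    using AE_example_law_finite[of 1] AE_example_law_finite[of 2] by auto
  then have "(\<integral>\<^sup>+x. ennreal (real (the_enat (x 1)) * real (the_enat (x 2))) \<partial>example_law)
      = (\<Sum>a. \<Sum>b. ennreal (example_survival a b))"
    by (simp only: nn_integral_coord_mult_eq_suminf[OF sets_example_law] emeasure_example_law_greater)
  also have "\<dots> = ennreal (15/4)"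
    by (rule suminf_ennreal_double[OF sums_example_survival_row sums_example_survival_rows example_survival_nonneg])
  finally show "(\<integral>\<^sup>+x. ennreal (real (the_enat (x 1)) * real (the_enat (x 2))) \<partial>example_law)
      = ennreal (15/4)" .
qed auto

lemma correlation_example_law:
  "correlation example_law (\<lambda>x. real (the_enat (x 1))) (\<lambda>x. real (the_enat (x 2))) = - 1/8"
proof -
  interpret prob_space example_law by (rule prob_space_example_law)
  have "correlation example_law (\<lambda>x. real (the_enat (x 1))) (\<lambda>x. real (the_enat (x 2)))
      = (15/4 - 2 * 2) / sqrt ((6 - 2\<^sup>2) * (6 - 2\<^sup>2))"
    by (intro correlation_eq has_bochner_integral_example_law_coord has_bochner_integral_example_law_cross
        has_bochner_integral_example_law_square) simp_all
  also have "\<dots> = - 1/8" by (simp add: real_sqrt_mult_self)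
  finally show ?thesis .
qed

theorem mainTheorem11:
  shows "(\<forall>d L. is_narrow_law d L \<longrightarrow> is_wide_law d L) \<and>
    (\<exists>L. is_wide_law 2 L \<and>
       (\<forall>n1 n2 :: nat. measure L {x \<in> space L. enat n1 < x 1 \<and> enat n2 < x 2}
            = (1/2) ^ max n1 n2 * (2/5) ^ min n1 n2) \<and>
       distr L L (\<lambda>x. x(1 := x 2, 2 := x 1)) = L \<and>
       \<not> is_narrow_law 2 L \<and>
       correlation L (\<lambda>x. real (the_enat (x 1))) (\<lambda>x. real (the_enat (x 2))) = - 1/8)"
proof (intro conjI allI impI exI)
  show "is_wide_law d L" if "is_narrow_law d L" for d L
    using that by (rule is_narrow_law_imp_is_wide_law)
  show "is_wide_law 2 example_law"
    unfolding is_wide_law_def example_law_def using wide_params_example_params by blast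
  show "measure example_law {x \<in> space example_law. enat n1 < x 1 \<and> enat n2 < x 2}
      = (1/2) ^ max n1 n2 * (2/5) ^ min n1 n2" for n1 n2
    unfolding example_survival_def[symmetric] by (rule measure_example_law_greater)
  show "distr example_law example_law (\<lambda>x. x(1 := x 2, 2 := x 1)) = example_law"
    by (rule example_law_swap_invariant)
  show "\<not> is_narrow_law 2 example_law"
    by (rule example_law_not_narrow)
  show "correlation example_law (\<lambda>x. real (the_enat (x 1))) (\<lambda>x. real (the_enat (x 2))) = - 1/8"
    by (rule correlation_example_law)
qed

end
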